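(* For every $m\ge 2$ and $n\ge 2$, the $m$th order $n$-dimensional Pascal tensor is strongly completely positive.
   Context: The $m$th order $n$-dimensional Pascal tensor is $\mathcal{P}=(p_{i_1\dots i_m})$ with $p_{i_1\dots i_m}=\frac{(i_1+\dots+i_m-m)!}{(i_1-1)!\cdots(i_m-1)!}$ for $i_1,\dots,i_m\in\{1,\dots,n\}$ (for $m=2$ this is the symmetric Pascal matrix). For $\mathbf{u}\in\mathbb{R}^n$, $\mathbf{u}^m$ is the tensor with entries $u_{i_1}\cdots u_{i_m}$. A symmetric tensor $\mathcal{A}$ of order $m$ and dimension $n$ is strongly completely positive if there are nonnegative vectors $\mathbf{u}^{(1)},\dots,\mathbf{u}^{(r)}\in\mathbb{R}^n$ spanning $\mathbb{R}^n$ such that $\mathcal{A}=(\mathbf{u}^{(1)})^m+\dots+(\mathbf{u}^{(r)})^m$. *)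

theory Defs
  imports "HOL-Analysis.Analysis"
begin

(* Conventions: indices are 0-based. A multi-index of an m-th order n-dimensional
   tensor is a function j :: nat \<Rightarrow> nat with j k < n for all k < m
   (j k = i_(k+1) - 1 in the paper's 1-based notation). A tensor is a function
   from multi-indices to reals; only its values on valid multi-indices matter.
   A vector in R^n is a function nat \<Rightarrow> real, only its values on {0..<n} matter. *)

definition valid_index :: "nat \<Rightarrow> nat \<Rightarrow> (nat \<Rightarrow> nat) \<Rightarrow> bool" where
  "valid_index m n j \<longleftrightarrow> (\<forall>k<m. j k < n)"

(* p_{i_1...i_m} = (i_1+...+i_m-m)! / ((i_1-1)!...(i_m-1)!) *)
definition pascal_tensor :: "nat \<Rightarrow> (nat \<Rightarrow> nat) \<Rightarrow> real" where
  "pascal_tensor m j = fact (\<Sum>k<m. j k) / (\<Prod>k<m. fact (j k))"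

definition tensor_power :: "nat \<Rightarrow> (nat \<Rightarrow> real) \<Rightarrow> (nat \<Rightarrow> nat) \<Rightarrow> real" where
  "tensor_power m u j = (\<Prod>k<m. u (j k))"

definition spans_Rn :: "nat \<Rightarrow> (nat \<Rightarrow> real) list \<Rightarrow> bool" where
  "spans_Rn n us \<longleftrightarrow>
     (\<forall>x :: nat \<Rightarrow> real. \<exists>c :: nat \<Rightarrow> real.
        \<forall>i<n. x i = (\<Sum>l<length us. c l * (us ! l) i))"

definition strongly_completely_positive ::
  "nat \<Rightarrow> nat \<Rightarrow> ((nat \<Rightarrow> nat) \<Rightarrow> real) \<Rightarrow> bool" where
  "strongly_completely_positive m n A \<longleftrightarrow>
     (\<forall>j j'. valid_index m n j \<longrightarrow> valid_index m n j' \<longrightarrow>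
        (\<exists>\<sigma>. \<sigma> permutes {..<m} \<and> (\<forall>k<m. j' k = j (\<sigma> k))) \<longrightarrow> A j = A j') \<and>
     (\<exists>us :: (nat \<Rightarrow> real) list.
        (\<forall>u\<in>set us. \<forall>i<n. u i \<ge> 0) \<and>
        spans_Rn n us \<and>
        (\<forall>j. valid_index m n j \<longrightarrow> A j = (\<Sum>u\<leftarrow>us. tensor_power m u j)))"

end

theory Submission
  imports Defs "HOL-Computational_Algebra.Polynomial"
begin

text \<open>
  With \<open>S = j\<^sub>1 + \<dots> + j\<^sub>m\<close>, the entry \<open>S! / (j\<^sub>1! \<cdots> j\<^sub>m!)\<close> has numerator
  \<open>S! = \<integral>\<^sub>0\<^sup>\<infinity> x\<^sup>S e\<^sup>-\<^sup>x dx\<close>. Gauss quadrature for the weight \<open>e\<^sup>-\<^sup>x\<close> on \<open>[0, \<infinity>)\<close> with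
  \<open>N\<close> nodes \<open>x\<^sub>l > 0\<close> and weights \<open>w\<^sub>l > 0\<close> is exact in degree \<open>< 2N\<close>, so for \<open>N = m n\<close>
  it gives \<open>S! = \<Sum>\<^sub>l w\<^sub>l x\<^sub>l\<^sup>S\<close>: the tensor is \<open>\<Sum>\<^sub>l u\<^sub>l\<^sup>m\<close> with the nonnegative vectors
  \<open>u\<^sub>l(i) = w\<^sub>l\<^sup>1\<^sup>/\<^sup>m x\<^sub>l\<^sup>i / i!\<close>, and the distinct nodes make them span (Vandermonde).

  No integral is ever formed: everything goes through the linear functional \<open>L(x\<^sup>s) = s!\<close>
  on polynomials. Its positivity on nonzero polynomials that are nonnegative on \<open>[0, \<infinity>)\<close>
  forces the Laguerre polynomial of degree \<open>N\<close> to have \<open>N\<close> distinct positive roots (the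
  nodes) and makes the weights positive.
\<close>

definition laguerre_functional :: "real poly \<Rightarrow> real" where
  "laguerre_functional p = (\<Sum>s\<le>degree p. coeff p s * fact s)"

lemma laguerre_functional_eq_sum:
  assumes "degree p < B"
  shows "laguerre_functional p = (\<Sum>s<B. coeff p s * fact s)"
  unfolding laguerre_functional_def using assms
  by (intro sum.mono_neutral_left) (auto simp: coeff_eq_0)

lemma laguerre_functional_add:
  "laguerre_functional (p + q) = laguerre_functional p + laguerre_functional q"
proof -
  define B where "B = Suc (max (degree p) (degree q))"
  have "degree (p + q) < B"
    using degree_add_le_max[of p q] by (simp add: B_def)
  then show ?thesis
    by (simp add: laguerre_functional_eq_sum[where B = B] B_def sum.distrib algebra_simps)
qed

lemma laguerre_functional_smult:
  "laguerre_functional (smult c p) = c * laguerre_functional p"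
  by (simp add: laguerre_functional_def sum_distrib_left mult.assoc)

lemma laguerre_functional_minus: "laguerre_functional (- p) = - laguerre_functional p"
  by (simp add: laguerre_functional_def sum_negf)

lemma laguerre_functional_sum:
  "laguerre_functional (\<Sum>a\<in>A. f a) = (\<Sum>a\<in>A. laguerre_functional (f a))"
  by (induction A rule: infinite_finite_induct)
    (simp_all add: laguerre_functional_add laguerre_functional_def[of 0])

lemma laguerre_functional_monom: "laguerre_functional (monom c a) = c * fact a"
proof -
  have "(\<Sum>s\<le>a. coeff (monom c a) s * fact s) = (\<Sum>s\<le>a. if s = a then c * fact a else 0)"
    by (intro sum.cong) (auto simp: coeff_monom)
  then show ?thesis
    by (cases "c = 0") (simp_all add: laguerre_functional_def degree_monom_eq)
qed

lemma pderiv_sum: "pderiv (\<Sum>a\<in>A. f a) = (\<Sum>a\<in>A. pderiv (f a))"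
  by (induction A rule: infinite_finite_induct) (auto simp: pderiv_add)

lemma coeff_0_higher_pderiv: "coeff ((pderiv ^^ k) p) 0 = fact k * coeff p k"
  by (simp add: coeff_higher_pderiv pochhammer_fact)

lemma higher_pderiv_eq_0:
  fixes p :: "'a::{comm_semiring_1,semiring_no_zero_divisors,semiring_char_0} poly"
  assumes "degree p < k"
  shows "(pderiv ^^ k) p = 0"
  using assms by (intro poly_eqI) (simp add: coeff_higher_pderiv coeff_eq_0)

lemma lead_coeff_pos_if_nonneg:
  fixes p :: "real poly"
  assumes "p \<noteq> 0" and nonneg: "\<And>x. x \<ge> 0 \<Longrightarrow> poly p x \<ge> 0"
  shows "lead_coeff p > 0"
proof (rule ccontr)
  assume "\<not> lead_coeff p > 0"
  then have "lead_coeff (- p) > 0"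
    using \<open>p \<noteq> 0\<close> by (simp add: less_le)
  then obtain x0 where "\<And>x. x \<ge> x0 \<Longrightarrow> poly (- p) x \<ge> lead_coeff (- p)"
    using poly_pinfty_gt_lc by blast
  then have "lead_coeff (- p) \<le> - poly p (max x0 0)"
    by simp
  with \<open>lead_coeff (- p) > 0\<close> nonneg[of "max x0 0"] show False
    by simp
qed

lemma exp_mult_poly_le_poly_0:
  fixes F :: "real poly"
  assumes "\<And>x. x \<ge> 0 \<Longrightarrow> poly (pderiv F) x \<le> poly F x" and "X \<ge> 0"
  shows "exp (- X) * poly F X \<le> poly F 0"
proof -
  define G where "G x = exp (- x) * poly F x" for x
  have "G X \<le> G 0"
  proof (rule DERIV_nonpos_imp_nonincreasing[OF \<open>X \<ge> 0\<close>])
    fix x :: real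
    assume "0 \<le> x"
    have "DERIV G x :> exp (- x) * (poly (pderiv F) x - poly F x)"
      unfolding G_def by (auto intro!: derivative_eq_intros simp: algebra_simps)
    moreover have "exp (- x) * (poly (pderiv F) x - poly F x) \<le> 0"
      using assms(1)[OF \<open>0 \<le> x\<close>] by (simp add: mult_nonneg_nonpos)
    ultimately show "\<exists>y. DERIV G x :> y \<and> y \<le> 0" by blast
  qed
  then show ?thesis by (simp add: G_def)
qed

lemma sum_higher_pderiv_minus_pderiv:
  fixes p :: "'a::{idom,semiring_char_0} poly"
  defines "F \<equiv> \<Sum>k\<le>degree p. (pderiv ^^ k) p"
  shows "F - pderiv F = p"
proof -
  have "F - pderiv F = (\<Sum>k\<le>degree p. (pderiv ^^ k) p - (pderiv ^^ Suc k) p)"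
    by (simp add: F_def pderiv_sum sum_subtractf)
  also have "\<dots> = p"
    using sum_telescope[of "\<lambda>k. (pderiv ^^ k) p" "degree p"]
    by (simp add: higher_pderiv_eq_0 del: funpow.simps)
  finally show ?thesis .
qed

lemma lead_coeff_sum_higher_pderiv:
  fixes p :: "'a::{idom,semiring_char_0} poly"
  defines "F \<equiv> \<Sum>k\<le>degree p. (pderiv ^^ k) p"
  shows "lead_coeff F = lead_coeff p"
proof -
  have "degree F \<le> degree p"
    unfolding F_def by (rule degree_sum_le) (auto simp: degree_higher_pderiv)
  then have "coeff (pderiv F) (degree p) = 0"
    by (simp add: coeff_pderiv coeff_eq_0)
  then have "coeff F (degree p) = lead_coeff p"
    using arg_cong[OF sum_higher_pderiv_minus_pderiv[of p], of "\<lambda>q. coeff q (degree p)"]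
    by (simp add: F_def)
  moreover have "degree F = degree p"
  proof (cases "p = 0")
    case False
    then show ?thesis
      using \<open>degree F \<le> degree p\<close> \<open>coeff F (degree p) = lead_coeff p\<close> le_degree[of F "degree p"]
      by simp
  qed (use \<open>degree F \<le> degree p\<close> in simp)
  ultimately show ?thesis
    by simp
qed

text \<open>With \<open>F = p + p' + p'' + \<dots>\<close> one has \<open>F - F' = p \<ge> 0\<close> on \<open>[0, \<infinity>)\<close>, so \<open>e\<^sup>-\<^sup>x F(x)\<close>
  is nonincreasing there; as \<open>F\<close> is eventually positive, \<open>L p = F(0) > 0\<close>.\<close>

lemma laguerre_functional_pos:
  fixes p :: "real poly"
  assumes "p \<noteq> 0" and nonneg: "\<And>x. x \<ge> 0 \<Longrightarrow> poly p x \<ge> 0"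
  shows "laguerre_functional p > 0"
proof -
  define F where "F = (\<Sum>k\<le>degree p. (pderiv ^^ k) p)"
  have "lead_coeff F > 0"
    using lead_coeff_pos_if_nonneg[OF assms] lead_coeff_sum_higher_pderiv[of p] by (simp add: F_def)
  then obtain x0 where x0: "\<And>x. x \<ge> x0 \<Longrightarrow> poly F x \<ge> lead_coeff F"
    using poly_pinfty_gt_lc by blast
  define X where "X = max x0 0"
  have "poly (pderiv F) x \<le> poly F x" if "x \<ge> 0" for x
    using nonneg[OF that] arg_cong[OF sum_higher_pderiv_minus_pderiv[of p], of "\<lambda>q. poly q x"]
    by (simp add: F_def)
  moreover have "X \<ge> 0"
    by (simp add: X_def)
  ultimately have "exp (- X) * poly F X \<le> poly F 0"
    by (rule exp_mult_poly_le_poly_0)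
  moreover have "0 < exp (- X) * poly F X"
    using x0[of X] \<open>lead_coeff F > 0\<close> by (simp add: X_def)
  moreover have "poly F 0 = laguerre_functional p"
    by (simp add: F_def poly_0_coeff_0 coeff_sum coeff_0_higher_pderiv
        laguerre_functional_def mult.commute)
  ultimately show ?thesis
    by simp
qed

lemma poly_pos_or_neg_if_no_nonneg_root:
  fixes g :: "real poly"
  assumes "\<And>x. x \<ge> 0 \<Longrightarrow> poly g x \<noteq> 0"
  shows "(\<forall>x\<ge>0. poly g x > 0) \<or> (\<forall>x\<ge>0. poly g x < 0)"
proof (rule ccontr)
  assume "\<not> ?thesis"
  then obtain a b where "a \<ge> 0" "\<not> poly g a > 0" "b \<ge> 0" "\<not> poly g b < 0"
    by blast
  with assms[of a] assms[of b] have "poly g a < 0" "poly g b > 0"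
    by linarith+
  then consider "a < b" | "b < a"
    by fastforce
  then obtain x where "x > min a b" "poly g x = 0"
  proof cases
    case 1
    then show ?thesis
      using that poly_IVT_pos[OF 1 \<open>poly g a < 0\<close> \<open>poly g b > 0\<close>] by auto
  next
    case 2
    then show ?thesis
      using that poly_IVT_neg[OF 2 \<open>poly g b > 0\<close> \<open>poly g a < 0\<close>] by auto
  qed
  with assms[of x] \<open>a \<ge> 0\<close> \<open>b \<ge> 0\<close> show False
    by (auto simp: min_less_iff_disj)
qed

lemma poly_nonneg_or_nonpos_if_even_order_roots:
  fixes g :: "real poly"
  assumes "g \<noteq> 0" and "\<And>x. x \<ge> 0 \<Longrightarrow> poly g x = 0 \<Longrightarrow> even (order x g)"
  shows "(\<forall>x\<ge>0. poly g x \<ge> 0) \<or> (\<forall>x\<ge>0. poly g x \<le> 0)"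
  using assms
proof (induction "degree g" arbitrary: g rule: less_induct)
  case less
  show ?case
  proof (cases "\<exists>x0\<ge>0. poly g x0 = 0")
    case True
    then obtain x0 where "x0 \<ge> 0" "poly g x0 = 0"
      by blast
    then have "order x0 g \<noteq> 0" and "even (order x0 g)"
      using less.prems by (auto simp: order_root)
    then have "2 \<le> order x0 g"
      by presburger
    then have "[:-x0, 1:] ^ 2 dvd g"
      using order_1[of x0 g] le_imp_power_dvd dvd_trans by blast
    then obtain h where h: "g = [:-x0, 1:] ^ 2 * h" ..
    with less.prems(1) have "h \<noteq> 0"
      by auto
    have "(\<forall>x\<ge>0. poly h x \<ge> 0) \<or> (\<forall>x\<ge>0. poly h x \<le> 0)"
    proof (rule less.hyps)
      show "degree h < degree g"
        using h \<open>h \<noteq> 0\<close> by (simp add: degree_mult_eq degree_power_eq)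
      fix x :: real
      assume "x \<ge> 0" "poly h x = 0"
      have "even (order x ([:-x0, 1:] ^ 2))"
        by (cases "x = x0") (simp_all add: order_power_n_n order_0I)
      moreover have "order x g = order x ([:-x0, 1:] ^ 2) + order x h"
        using h less.prems(1) by (simp add: order_mult)
      moreover have "even (order x g)"
        using less.prems(2)[of x] \<open>x \<ge> 0\<close> \<open>poly h x = 0\<close> h by simp
      ultimately show "even (order x h)"
        by simp
    qed (fact \<open>h \<noteq> 0\<close>)
    moreover have "poly g x = (x - x0) ^ 2 * poly h x" for x
      by (simp add: h)
    ultimately show ?thesis
      by (metis mult_nonneg_nonneg mult_nonneg_nonpos zero_le_power2)
  next
    case False
    then show ?thesis
      using poly_pos_or_neg_if_no_nonneg_root[of g] by (auto simp: less_imp_le)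
  qed
qed

lemma laguerre_functional_nonzero_if_even_order_roots:
  assumes "g \<noteq> 0" and "\<And>x. x \<ge> 0 \<Longrightarrow> poly g x = 0 \<Longrightarrow> even (order x g)"
  shows "laguerre_functional g \<noteq> 0"
  using poly_nonneg_or_nonpos_if_even_order_roots[OF assms]
proof
  assume "\<forall>x\<ge>0. poly g x \<ge> 0"
  then show ?thesis
    using laguerre_functional_pos[OF \<open>g \<noteq> 0\<close>] by simp
next
  assume "\<forall>x\<ge>0. poly g x \<le> 0"
  then show ?thesis
    using laguerre_functional_pos[of "- g"] \<open>g \<noteq> 0\<close> by (simp add: laguerre_functional_minus)
qed

lemma order_prod_linear:
  fixes R :: "'a::idom set"
  assumes "finite R"
  shows "order x (\<Prod>y\<in>R. [:-y, 1:]) = (if x \<in> R then 1 else 0)"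
  using assms
proof (induction R rule: finite_induct)
  case (insert y R)
  have "(\<Prod>y\<in>R. [:-y, 1:]) \<noteq> 0"
    using insert.hyps(1) by (simp add: prod_zero_iff)
  then have "order x ([:-y, 1:] * (\<Prod>y\<in>R. [:-y, 1:])) =
      order x [:-y, 1:] + order x (\<Prod>y\<in>R. [:-y, 1:])"
    by (intro order_mult) (simp only: mult_eq_0_iff pCons_eq_0_iff one_neq_zero, simp)
  moreover have "order x [:-y, 1:] = (if x = y then 1 else 0)"
    using order_power_n_n[of x 1] by (auto intro: order_0I)
  ultimately show ?case
    using insert by auto
qed simp

lemma higher_pderiv_monom_add:
  "(pderiv ^^ k) (monom c (j + k)) = monom (pochhammer (of_nat (Suc j)) k * c) j"
  by (intro poly_eqI) (simp add: coeff_higher_pderiv coeff_monom)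

lemma fact_add_eq_fact_mult_pochhammer:
  "fact (j + k) = (fact j * pochhammer (of_nat (Suc j)) k :: 'a::{comm_semiring_1,semiring_char_0})"
  using pochhammer_product'[of "1::'a" j k] by (simp add: pochhammer_fact add.commute)

lemma linear_power_dvd_pderiv:
  fixes p :: "'a::idom poly"
  assumes "[:-a, 1:] ^ Suc r dvd p"
  shows "[:-a, 1:] ^ r dvd pderiv p"
proof -
  from assms obtain s where s: "p = [:-a, 1:] ^ Suc r * s" ..
  have "pderiv p = [:-a, 1:] ^ r * ([:-a, 1:] * pderiv s + smult (of_nat (Suc r)) s)"
    unfolding s pderiv_mult pderiv_power_Suc by (simp add: algebra_simps pderiv_pCons)
  then show ?thesis by simp
qed

lemma linear_power_dvd_higher_pderiv:
  fixes p :: "'a::idom poly"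
  assumes "[:-a, 1:] ^ (r + k) dvd p"
  shows "[:-a, 1:] ^ r dvd (pderiv ^^ k) p"
  using assms
proof (induction k arbitrary: p)
  case (Suc k)
  then have "[:-a, 1:] ^ r dvd (pderiv ^^ k) (pderiv p)"
    by (simp add: linear_power_dvd_pderiv)
  then show ?case
    by (simp add: funpow_Suc_right del: funpow.simps)
qed simp

lemma linear_power_expand:
  "([:-1, 1:] :: 'a::comm_ring_1 poly) ^ N = (\<Sum>j\<le>N. monom (of_nat (N choose j) * (-1) ^ (N - j)) j)"
proof -
  have "([:-1, 1:] :: 'a poly) ^ N = (monom 1 1 + [:-1:]) ^ N"
    by (simp add: monom_altdef)
  also have "\<dots> = (\<Sum>j\<le>N. of_nat (N choose j) * monom 1 1 ^ j * [:-1:] ^ (N - j))"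
    by (rule binomial_ring)
  also have "\<dots> = (\<Sum>j\<le>N. monom (of_nat (N choose j) * (-1) ^ (N - j)) j)"
    by (intro sum.cong refl)
      (simp add: monom_power of_nat_poly poly_const_pow monom_altdef mult.commute flip: smult_monom)
  finally show ?thesis .
qed

text \<open>\<^term>\<open>laguerre_poly N\<close> is \<open>(-1)^N\<close> times the classical Laguerre polynomial \<open>L\<^sub>N\<close>.\<close>

definition laguerre_poly :: "nat \<Rightarrow> real poly" where
  "laguerre_poly N = (\<Sum>j\<le>N. monom (of_nat (N choose j) * (-1) ^ (N - j) / fact j) j)"

lemma coeff_laguerre_poly:
  "coeff (laguerre_poly N) i = (if i \<le> N then of_nat (N choose i) * (-1) ^ (N - i) / fact i else 0)"
  by (simp add: laguerre_poly_def coeff_sum coeff_monom)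

lemma degree_laguerre_poly: "degree (laguerre_poly N) = N"
proof (rule antisym)
  show "degree (laguerre_poly N) \<le> N"
    by (rule degree_le) (simp add: coeff_laguerre_poly)
  show "N \<le> degree (laguerre_poly N)"
    by (rule le_degree) (simp add: coeff_laguerre_poly)
qed

lemma laguerre_poly_nonzero: "laguerre_poly N \<noteq> 0"
  using coeff_laguerre_poly[of N N] by auto

lemma poly_laguerre_poly_0: "poly (laguerre_poly N) 0 \<noteq> 0"
  by (simp add: poly_0_coeff_0 coeff_laguerre_poly)

text \<open>\<open>L(q x\<^sup>k) = \<Sum>\<^sub>j (N choose j) (-1)\<^sup>N\<^sup>-\<^sup>j (j + k)! / j!\<close> is the \<open>k\<close>-th derivative of
  \<open>x\<^sup>k (x - 1)\<^sup>N\<close> at \<open>x = 1\<close>, which vanishes since \<open>(x - 1)\<^sup>N\<^sup>-\<^sup>k\<close> divides that derivative.\<close>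

lemma laguerre_functional_laguerre_poly_mult_monom:
  assumes "k < N"
  shows "laguerre_functional (laguerre_poly N * monom 1 k) = 0"
proof -
  define a :: "nat \<Rightarrow> real" where "a j = of_nat (N choose j) * (-1) ^ (N - j)" for j
  define D :: "real poly" where "D = (pderiv ^^ k) (monom 1 k * [:-1, 1:] ^ N)"
  have "laguerre_functional (laguerre_poly N * monom 1 k) =
      (\<Sum>j\<le>N. a j * pochhammer (of_nat (Suc j)) k)"
    by (simp add: laguerre_poly_def sum_distrib_right laguerre_functional_sum mult_monom
        laguerre_functional_monom fact_add_eq_fact_mult_pochhammer a_def)
      (simp add: mult.assoc)
  also have "\<dots> = poly D 1"
  proof -
    have "monom 1 k * [:-1, 1:] ^ N = (\<Sum>j\<le>N. monom (a j) (j + k))"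
      by (simp add: linear_power_expand sum_distrib_left mult_monom a_def add.commute)
    then show ?thesis
      by (simp add: D_def higher_pderiv_sum higher_pderiv_monom_add poly_sum poly_monom mult.commute)
  qed
  also have "\<dots> = 0"
  proof -
    have "[:-1, 1:] ^ (N - k + k) dvd monom 1 k * ([:-1, 1:] :: real poly) ^ N"
      using assms by simp
    then have "[:-1, 1:] ^ (N - k) dvd D"
      unfolding D_def by (rule linear_power_dvd_higher_pderiv)
    then show ?thesis
      using assms by (auto elim!: dvdE)
  qed
  finally show ?thesis .
qed

lemma laguerre_functional_laguerre_poly_mult:
  assumes "degree s < N"
  shows "laguerre_functional (laguerre_poly N * s) = 0"
proof -
  have "laguerre_poly N * s = laguerre_poly N * (\<Sum>k\<le>degree s. smult (coeff s k) (monom 1 k))"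
    by (simp add: smult_monom poly_as_sum_of_monoms)
  also have "\<dots> = (\<Sum>k\<le>degree s. smult (coeff s k) (laguerre_poly N * monom 1 k))"
    by (simp add: sum_distrib_left)
  finally have "laguerre_functional (laguerre_poly N * s) =
      (\<Sum>k\<le>degree s. coeff s k * laguerre_functional (laguerre_poly N * monom 1 k))"
    by (simp only: laguerre_functional_sum laguerre_functional_smult)
  also have "\<dots> = 0"
    using assms by (intro sum.neutral) (simp add: laguerre_functional_laguerre_poly_mult_monom)
  finally show ?thesis .
qed

text \<open>If fewer than \<open>N\<close> positive roots had odd order, multiplying by the linear factors at
  those roots would give a polynomial of degree \<open>< 2N\<close> that is annihilated by \<open>L\<close>
  (orthogonality) but has constant sign on \<open>[0, \<infinity>)\<close>.\<close>

lemma card_positive_roots_laguerre_poly: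
  "N \<le> card {x. 0 < x \<and> poly (laguerre_poly N) x = 0}"
proof -
  define q where "q = laguerre_poly N"
  define R where "R = {x. 0 < x \<and> odd (order x q)}"
  have R_subset: "R \<subseteq> {x. 0 < x \<and> poly q x = 0}"
    by (auto simp: R_def order_root)
  have "finite {x. 0 < x \<and> poly q x = 0}"
    using poly_roots_finite[of q] by (simp add: q_def laguerre_poly_nonzero)
  then have "finite R"
    using R_subset by (rule finite_subset[rotated])
  have "N \<le> card R"
  proof (rule ccontr)
    assume "\<not> N \<le> card R"
    define P where "P = (\<Prod>y\<in>R. [:-y, 1:])"
    define g where "g = q * P"
    have poly_P: "poly P x = (\<Prod>y\<in>R. x - y)" for x
      by (simp add: P_def poly_prod)
    have "P \<noteq> 0"
      using \<open>finite R\<close> by (simp add: P_def prod_zero_iff)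
    then have "g \<noteq> 0"
      by (simp add: g_def q_def laguerre_poly_nonzero)
    have "degree P = card R"
      unfolding P_def by (subst degree_prod_eq_sum_degree) auto
    then have "laguerre_functional g = 0"
      using \<open>\<not> N \<le> card R\<close> by (simp add: g_def q_def laguerre_functional_laguerre_poly_mult)
    moreover have "even (order x g)" if "x \<ge> 0" "poly g x = 0" for x
    proof -
      have "poly P 0 \<noteq> 0"
        using \<open>finite R\<close> by (simp add: poly_P prod_zero_iff R_def)
      with poly_laguerre_poly_0[of N] \<open>poly g x = 0\<close> have "x \<noteq> 0"
        by (auto simp: g_def q_def)
      with \<open>x \<ge> 0\<close> have "x \<in> R \<longleftrightarrow> odd (order x q)"
        by (simp add: R_def)
      moreover have "order x g = order x q + (if x \<in> R then 1 else 0)"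
        using \<open>g \<noteq> 0\<close> order_mult[of q P x] order_prod_linear[OF \<open>finite R\<close>, of x]
        by (simp add: g_def P_def)
      ultimately show ?thesis
        by simp
    qed
    ultimately show False
      using laguerre_functional_nonzero_if_even_order_roots[OF \<open>g \<noteq> 0\<close>] by blast
  qed
  also have "card R \<le> card {x. 0 < x \<and> poly q x = 0}"
    using \<open>finite {x. 0 < x \<and> poly q x = 0}\<close> R_subset by (rule card_mono)
  finally show ?thesis
    by (simp add: q_def)
qed

definition lagrange_basis :: "(nat \<Rightarrow> 'a::field) \<Rightarrow> nat \<Rightarrow> nat \<Rightarrow> 'a poly" where
  "lagrange_basis x n l = (\<Prod>k\<in>{..<n} - {l}. smult (1 / (x l - x k)) [:- x k, 1:])"

lemma poly_lagrange_basis: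
  assumes "inj_on x {..<n}" "k < n" "l < n"
  shows "poly (lagrange_basis x n l) (x k) = (if k = l then 1 else 0)"
proof (cases "k = l")
  case True
  have "poly (smult (1 / (x l - x k')) [:- x k', 1:]) (x l) = 1" if "k' \<in> {..<n} - {l}" for k'
  proof -
    have "x l - x k' \<noteq> 0"
      using that assms(1,3) by (auto dest: inj_onD)
    then show ?thesis
      by (simp flip: diff_divide_distrib)
  qed
  then show ?thesis
    using True by (simp add: lagrange_basis_def poly_prod)
next
  case False
  then show ?thesis
    using assms(2) by (force simp: lagrange_basis_def poly_prod prod_zero_iff)
qed

lemma degree_lagrange_basis:
  assumes "l < n"
  shows "degree (lagrange_basis x n l) < n"
proof -
  have "degree (lagrange_basis x n l) \<le> (\<Sum>k\<in>{..<n} - {l}. degree (smult (1 / (x l - x k)) [:- x k, 1:]))"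
    unfolding lagrange_basis_def by (rule degree_prod_sum_le[unfolded o_def]) simp
  also have "\<dots> \<le> (\<Sum>k\<in>{..<n} - {l}. 1)"
    by (intro sum_mono order.trans[OF degree_smult_le]) simp
  also have "\<dots> = card ({..<n} - {l})"
    by simp
  also have "\<dots> < n"
    using assms by simp
  finally show ?thesis .
qed

lemma lagrange_interpolation:
  assumes "inj_on x {..<n}" "degree p < n"
  shows "p = (\<Sum>l<n. smult (poly p (x l)) (lagrange_basis x n l))"
    (is "p = ?q")
proof (rule poly_eqI_degree)
  fix y
  assume "y \<in> x ` {..<n}"
  then obtain k where "k < n" "y = x k"
    by auto
  then have "poly ?q y = (\<Sum>l<n. poly p (x l) * (if k = l then 1 else 0))"
    using assms(1) by (simp add: poly_sum poly_lagrange_basis)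
  also have "\<dots> = poly p y"
    using \<open>k < n\<close> \<open>y = x k\<close> by (simp add: if_distrib cong: if_cong)
  finally show "poly p y = poly ?q y" ..
next
  have "card (x ` {..<n}) = n"
    using assms(1) by (simp add: card_image)
  moreover have "degree ?q < n"
    using assms(2) degree_lagrange_basis
    by (intro degree_sum_less) (auto intro: le_less_trans[OF degree_smult_le])
  ultimately show "degree p < card (x ` {..<n})" "degree ?q < card (x ` {..<n})"
    using assms(2) by simp_all
qed

lemma sum_power_mult_coeff_lagrange_basis:
  assumes "inj_on x {..<n}" "i < n"
  shows "(\<Sum>l<n. x l ^ i * coeff (lagrange_basis x n l) k) = (if i = k then 1 else 0)"
proof -
  have "monom 1 i = (\<Sum>l<n. smult (x l ^ i) (lagrange_basis x n l))"
    using lagrange_interpolation[OF assms(1), of "monom 1 i"] assms(2)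
    by (simp add: degree_monom_eq poly_monom)
  then have "(\<Sum>l<n. x l ^ i * coeff (lagrange_basis x n l) k) = coeff (monom 1 i) k"
    by (simp add: coeff_sum)
  then show ?thesis
    by (simp only: coeff_monom)
qed

lemma laguerre_functional_gauss_quadrature:
  assumes inj: "inj_on x {..<N}" and roots: "\<And>l. l < N \<Longrightarrow> poly (laguerre_poly N) (x l) = 0"
    and "degree p < 2 * N"
  shows "laguerre_functional p = (\<Sum>l<N. laguerre_functional (lagrange_basis x N l) * poly p (x l))"
proof -
  define q where "q = laguerre_poly N"
  define d where "d = p div q"
  define r where "r = p mod q"
  have "q \<noteq> 0" and "degree q = N"
    by (simp_all add: q_def laguerre_poly_nonzero degree_laguerre_poly)
  have p_eq: "p = q * d + r"
    by (simp add: d_def r_def)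
  have "N > 0"
    using \<open>degree p < 2 * N\<close> by simp
  then have "degree r < N"
    using degree_mod_less[OF \<open>q \<noteq> 0\<close>, of p] \<open>degree q = N\<close> by (auto simp: r_def)
  have "degree d < N"
  proof (cases "d = 0")
    case False
    have "N + degree d = degree (q * d)"
      using False \<open>q \<noteq> 0\<close> \<open>degree q = N\<close> by (simp add: degree_mult_eq)
    also have "\<dots> = degree (p - r)"
      using p_eq by simp
    also have "\<dots> \<le> max (degree p) (degree r)"
      by (rule degree_diff_le_max)
    finally show ?thesis
      using \<open>degree p < 2 * N\<close> \<open>degree r < N\<close> by simp
  qed (use \<open>N > 0\<close> in simp)
  have "laguerre_functional p = laguerre_functional (q * d) + laguerre_functional r"
    by (subst p_eq) (rule laguerre_functional_add)
  also have "laguerre_functional (q * d) = 0"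
    unfolding q_def using \<open>degree d < N\<close> by (rule laguerre_functional_laguerre_poly_mult)
  also have "laguerre_functional r =
      laguerre_functional (\<Sum>l<N. smult (poly r (x l)) (lagrange_basis x N l))"
    using lagrange_interpolation[OF inj \<open>degree r < N\<close>] by (rule arg_cong)
  also have "\<dots> = (\<Sum>l<N. laguerre_functional (lagrange_basis x N l) * poly p (x l))"
    using p_eq roots
    by (simp add: laguerre_functional_sum laguerre_functional_smult mult.commute q_def)
  finally show ?thesis
    by simp
qed

lemma laguerre_functional_lagrange_basis_pos:
  assumes inj: "inj_on x {..<N}" and roots: "\<And>l. l < N \<Longrightarrow> poly (laguerre_poly N) (x l) = 0"
    and "l < N"
  shows "laguerre_functional (lagrange_basis x N l) > 0"
proof -
  define e where "e = lagrange_basis x N l"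
  have poly_e: "poly e (x k) = (if k = l then 1 else 0)" if "k < N" for k
    using inj that \<open>l < N\<close> by (simp add: e_def poly_lagrange_basis)
  have "degree (e * e) < 2 * N"
    using degree_mult_le[of e e] degree_lagrange_basis[OF \<open>l < N\<close>, of x] by (simp add: e_def)
  then have "laguerre_functional (e * e) =
      (\<Sum>k<N. laguerre_functional (lagrange_basis x N k) * poly (e * e) (x k))"
    using laguerre_functional_gauss_quadrature[OF inj roots] by blast
  also have "\<dots> = (\<Sum>k<N. if k = l then laguerre_functional e else 0)"
    by (intro sum.cong refl) (auto simp: poly_e simp flip: e_def)
  also have "\<dots> = laguerre_functional e"
    using \<open>l < N\<close> by simp
  finally have "laguerre_functional e = laguerre_functional (e * e)" ..
  moreover have "e \<noteq> 0"
    using poly_e[OF \<open>l < N\<close>] by auto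
  then have "laguerre_functional (e * e) > 0"
    by (intro laguerre_functional_pos) simp_all
  ultimately show ?thesis
    by (simp add: e_def)
qed

lemma factorial_moments_quadrature:
  obtains x w :: "nat \<Rightarrow> real"
  where "inj_on x {..<N}" and "\<And>l. l < N \<Longrightarrow> x l > 0" and "\<And>l. l < N \<Longrightarrow> w l > 0"
    and "\<And>a. a < 2 * N \<Longrightarrow> (\<Sum>l<N. w l * x l ^ a) = fact a"
proof -
  define Z where "Z = {x. 0 < x \<and> poly (laguerre_poly N) x = 0}"
  have "finite Z"
    using poly_roots_finite[OF laguerre_poly_nonzero] by (simp add: Z_def)
  obtain R where "R \<subseteq> Z" "card R = N"
    using card_positive_roots_laguerre_poly[of N] obtain_subset_with_card_n
    unfolding Z_def by metis
  then obtain x where x: "bij_betw x {..<N} R"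
    using ex_bij_betw_nat_finite[of R] finite_subset[OF _ \<open>finite Z\<close>]
    by (auto simp: atLeast0LessThan)
  then have inj: "inj_on x {..<N}" and nodes: "\<And>l. l < N \<Longrightarrow> x l \<in> Z"
    using \<open>R \<subseteq> Z\<close> by (auto simp: bij_betw_def)
  define w where "w l = laguerre_functional (lagrange_basis x N l)" for l
  have roots: "poly (laguerre_poly N) (x l) = 0" if "l < N" for l
    using nodes[OF that] by (simp add: Z_def)
  show thesis
  proof
    show "inj_on x {..<N}" by (fact inj)
    show "x l > 0" if "l < N" for l
      using nodes[OF that] by (simp add: Z_def)
    show "w l > 0" if "l < N" for l
      unfolding w_def using inj roots that by (rule laguerre_functional_lagrange_basis_pos)
    show "(\<Sum>l<N. w l * x l ^ a) = fact a" if "a < 2 * N" for a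
      using laguerre_functional_gauss_quadrature[OF inj roots, of "monom 1 a"] that
      by (simp add: w_def laguerre_functional_monom degree_monom_eq poly_monom)
  qed
qed

lemma pascal_tensor_eq_if_permuted:
  assumes "\<exists>\<sigma>. \<sigma> permutes {..<m} \<and> (\<forall>k<m. j' k = j (\<sigma> k))"
  shows "pascal_tensor m j = pascal_tensor m j'"
proof -
  from assms obtain \<sigma> where \<sigma>: "\<sigma> permutes {..<m}" and j': "\<And>k. k < m \<Longrightarrow> j' k = j (\<sigma> k)"
    by blast
  have "(\<Sum>k<m. j' k) = (\<Sum>k<m. j k)"
    using sum.permute[OF \<sigma>, of j] j' by (simp add: comp_def)
  moreover have "(\<Prod>k<m. fact (j' k) :: real) = (\<Prod>k<m. fact (j k))"
    using prod.permute[OF \<sigma>, of "\<lambda>k. fact (j k) :: real"] j' by (simp add: comp_def)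
  ultimately show ?thesis
    by (simp add: pascal_tensor_def)
qed

lemma sum_valid_index_less:
  assumes "valid_index m n j" and "m > 0"
  shows "(\<Sum>k<m. j k) < m * n"
proof -
  have "(\<Sum>k<m. j k) < (\<Sum>k<m. n)"
    using assms by (intro sum_strict_mono) (auto simp: valid_index_def)
  then show ?thesis
    by simp
qed

lemma spans_Rn_scaled_powers:
  fixes x :: "nat \<Rightarrow> real"
  assumes "inj_on x {..<n}" and "n \<le> N"
    and "\<And>l. l < n \<Longrightarrow> c l \<noteq> 0" and "\<And>i. i < n \<Longrightarrow> d i \<noteq> 0"
  shows "spans_Rn n (map (\<lambda>l i. c l * x l ^ i / d i) [0..<N])"
proof -
  define u where "u l i = c l * x l ^ i / d i" for l i
  have "\<exists>a. \<forall>i<n. y i = (\<Sum>l<N. a l * u l i)" for y :: "nat \<Rightarrow> real"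
  proof (intro exI allI impI)
    define z where "z k = d k * y k" for k
    define a where "a l = (\<Sum>k<n. z k * coeff (lagrange_basis x n l) k) / c l" for l
    fix i
    assume "i < n"
    have "(\<Sum>l<N. (if l < n then a l else 0) * u l i) = (\<Sum>l<n. (if l < n then a l else 0) * u l i)"
      using \<open>n \<le> N\<close> by (intro sum.mono_neutral_right) auto
    also have "\<dots> = (\<Sum>l<n. \<Sum>k<n. z k * (x l ^ i * coeff (lagrange_basis x n l) k)) / d i"
      unfolding sum_divide_distrib
      by (intro sum.cong refl)
        (simp add: a_def u_def assms(3) sum_distrib_left sum_divide_distrib mult_ac)
    also have "\<dots> = (\<Sum>k<n. z k * (\<Sum>l<n. x l ^ i * coeff (lagrange_basis x n l) k)) / d i"
      by (subst sum.swap) (simp add: sum_distrib_left)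
    also have "\<dots> = (\<Sum>k<n. if k = i then z k else 0) / d i"
      by (intro arg_cong[where f = "\<lambda>s. s / d i"] sum.cong refl)
        (simp add: sum_power_mult_coeff_lagrange_basis[OF assms(1) \<open>i < n\<close>])
    also have "\<dots> = y i"
      using \<open>i < n\<close> assms(4)[OF \<open>i < n\<close>] by (simp add: z_def)
    finally show "y i = (\<Sum>l<N. (if l < n then a l else 0) * u l i)" ..
  qed
  moreover have "(\<Sum>l<N. a l * (map u [0..<N] ! l) i) = (\<Sum>l<N. a l * u l i)" for a i
    by (intro sum.cong) simp_all
  ultimately show ?thesis
    by (simp add: spans_Rn_def flip: u_def)
qed

definition quadrature_vectors ::
    "nat \<Rightarrow> (nat \<Rightarrow> real) \<Rightarrow> (nat \<Rightarrow> real) \<Rightarrow> nat \<Rightarrow> (nat \<Rightarrow> real) list" where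
  "quadrature_vectors m x w N = map (\<lambda>l i. root m (w l) * x l ^ i / fact i) [0..<N]"

lemma quadrature_vectors_nonneg:
  assumes "\<forall>l<N. x l \<ge> 0" and "\<forall>l<N. w l \<ge> 0"
  shows "\<forall>u\<in>set (quadrature_vectors m x w N). \<forall>i. u i \<ge> 0"
  using assms by (auto simp: quadrature_vectors_def real_root_ge_zero)

lemma spans_Rn_quadrature_vectors:
  assumes "inj_on x {..<n}" and "n \<le> N" and "m > 0" and "\<And>l. l < n \<Longrightarrow> w l \<noteq> 0"
  shows "spans_Rn n (quadrature_vectors m x w N)"
  unfolding quadrature_vectors_def using assms by (intro spans_Rn_scaled_powers) simp_all

lemma pascal_tensor_eq_sum_quadrature_vectors:
  assumes "m > 0" and "\<And>l. l < N \<Longrightarrow> w l \<ge> 0"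
    and "(\<Sum>l<N. w l * x l ^ (\<Sum>k<m. j k)) = fact (\<Sum>k<m. j k)"
  shows "pascal_tensor m j = (\<Sum>u\<leftarrow>quadrature_vectors m x w N. tensor_power m u j)"
proof -
  have "tensor_power m (\<lambda>i. root m (w l) * x l ^ i / fact i) j =
      w l * x l ^ (\<Sum>k<m. j k) / (\<Prod>k<m. fact (j k))" if "l < N" for l
    using assms(1) assms(2)[OF that]
    by (simp add: tensor_power_def prod.distrib prod_dividef power_sum real_root_pow_pos2)
  then have "(\<Sum>u\<leftarrow>quadrature_vectors m x w N. tensor_power m u j) =
      (\<Sum>l<N. w l * x l ^ (\<Sum>k<m. j k)) / (\<Prod>k<m. fact (j k))"
    by (simp add: quadrature_vectors_def interv_sum_list_conv_sum_set_nat atLeast0LessThan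
        sum_divide_distrib)
  then show ?thesis
    using assms(3) by (simp add: pascal_tensor_def)
qed

theorem theorem3p1:
  fixes m n :: nat
  assumes "m \<ge> 2" and "n \<ge> 2"
  shows "strongly_completely_positive m n (pascal_tensor m)"
proof -
  \<comment> \<open>\<open>N\<close> nodes: at least \<open>n\<close> for spanning, and more than any index sum \<open>j\<^sub>1 + \<dots> + j\<^sub>m\<close>.\<close>
  define N where "N = m * n"
  obtain x w :: "nat \<Rightarrow> real"
    where inj: "inj_on x {..<N}" and x_pos: "\<And>l. l < N \<Longrightarrow> x l > 0"
    and w_pos: "\<And>l. l < N \<Longrightarrow> w l > 0"
    and moments: "\<And>a. a < 2 * N \<Longrightarrow> (\<Sum>l<N. w l * x l ^ a) = fact a"
    using factorial_moments_quadrature[of N] by blast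
  have "m > 0" and "n \<le> N"
    using assms by (simp_all add: N_def)
  show ?thesis
    unfolding strongly_completely_positive_def
  proof (intro conjI allI impI exI[of _ "quadrature_vectors m x w N"])
    show "pascal_tensor m j = (\<Sum>u\<leftarrow>quadrature_vectors m x w N. tensor_power m u j)"
      if "valid_index m n j" for j
      using \<open>m > 0\<close> w_pos moments sum_valid_index_less[OF that \<open>m > 0\<close>]
      by (intro pascal_tensor_eq_sum_quadrature_vectors) (simp_all add: less_imp_le N_def)
    show "spans_Rn n (quadrature_vectors m x w N)"
    proof (rule spans_Rn_quadrature_vectors)
      show "inj_on x {..<n}"
        by (rule inj_on_subset[OF inj]) (simp add: \<open>n \<le> N\<close>)
      show "w l \<noteq> 0" if "l < n" for l
        using w_pos[of l] that \<open>n \<le> N\<close> by (simp add: less_imp_neq)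
    qed fact+
    have "\<forall>l<N. x l \<ge> 0" and "\<forall>l<N. w l \<ge> 0"
      using x_pos w_pos by (simp_all add: less_imp_le)
    then have "\<forall>u\<in>set (quadrature_vectors m x w N). \<forall>i. u i \<ge> 0"
      by (rule quadrature_vectors_nonneg)
    then show "\<forall>u\<in>set (quadrature_vectors m x w N). \<forall>i<n. u i \<ge> 0"
      by blast
  qed (rule pascal_tensor_eq_if_permuted)
qed

end
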